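(* For every $n\ge1$, the bijection $B_0$ from signed forests of rooted trees on $\{1,\dots,n\}$ to $C(n+1)$ is compatible with the actions of $\mathfrak{S}_{n+1}$: for every $\sigma\in\mathfrak{S}_{n+1}$ and every signed forest $\varepsilon F$, $B_0(\sigma\cdot(\varepsilon F))=\sigma\cdot B_0(\varepsilon F)$.
   Context: A shrub $P$ on a finite set $I$ is a set $E$ of edges with a height function $h_P:I\to\mathbb{N}$ satisfying: edges join vertices whose heights differ by $1$; every vertex of positive height covers some vertex ($j$ covers $i$ if $\{i,j\}\in E$ and $h(j)=h(i)+1$); no four distinct $a,b,c,d$ with $a$ covering $b,c$, $c$ covering $d$, $\{b,d\}\notin E$; no five distinct $a,b,c,d,e$ with $a$ covering $c,d$, $b$ covering $d,e$, $\{a,e\},\{b,c\}\notin E$. Forests of rooted trees are the shrubs (height = distance to root) in which no vertex covers two distinct vertices. Each shrub $P$ on $\{1,\dots,n\}$ has a fraction $f_P\in\mathbb{Q}(u_1,\dots,u_n)$, its image under the operad morphism $\operatorname{Arb}\to\operatorname{Mould}$ determined by $[2\triangleleft1]\mapsto1/(u_1(u_1+u_2))$, $[1][2]\mapsto1/(u_1u_2)$ (for a forest, $f_F=\prod_j 1/\sum_{k\in F_j}u_k$ where $F_j$ is the subtree rooted at $j$). $\mathfrak{S}_{n+1}$ (permutations of $\{0,\dots,n\}$) acts on $\mathbb{Q}(u_1,\dots,u_n)$ by setting $u_0=-(u_1+\dots+u_n)$ and permuting $u_0,\dots,u_n$. On signed shrubs $\varepsilon P$ ($\varepsilon=\pm1$)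 the anticyclic action is $\sigma\cdot(\varepsilon P)=\varepsilon'P'$ where $\varepsilon'f_{P'}=\sigma\cdot(\varepsilon f_P)$ (well defined since $\varepsilon P\mapsto\varepsilon f_P$ is injective with $\mathfrak{S}_{n+1}$-stable image); it maps signed forests to signed forests. $C(n+1)$ is the set of signed rooted trees $\varepsilon(T,r)$ on $\{0,1,\dots,n\}$ modulo the relation $(T,r)=-(T,r')$ whenever $r'$ is adjacent to $r$ in $T$; $\mathfrak{S}_{n+1}$ acts on it by relabelling vertices. $B_0(\varepsilon F)=\varepsilon B_+(0,F)$, where $B_+(0,F)$ is the tree rooted at a new vertex $0$ obtained by joining $0$ to the roots of the trees of $F$. *)

theory Defs
  imports Complex_Main "HOL-Combinatorics.Permutations"
begin

(* A forest of rooted trees on {1..n}, given by its parent function: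
   p i = Some j means that j is the parent of i; roots have p i = None. *)
definition par_rel :: "(nat \<Rightarrow> nat option) \<Rightarrow> (nat \<times> nat) set" where
  "par_rel p = {(i, j). p i = Some j}"

definition is_forest :: "nat \<Rightarrow> (nat \<Rightarrow> nat option) \<Rightarrow> bool" where
  "is_forest n p \<longleftrightarrow>
     (\<forall>i. i \<notin> {1..n} \<longrightarrow> p i = None) \<and>
     (\<forall>i j. p i = Some j \<longrightarrow> j \<in> {1..n}) \<and>
     (\<forall>i. (i, i) \<notin> (par_rel p)\<^sup>+)"

definition subtree :: "(nat \<Rightarrow> nat option) \<Rightarrow> nat \<Rightarrow> nat set" where
  "subtree p j = {k. (k, j) \<in> (par_rel p)\<^sup>*}"

definition fF :: "nat \<Rightarrow> (nat \<Rightarrow> nat option) \<Rightarrow> (nat \<Rightarrow> real) \<Rightarrow> real" where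
  "fF n p u = (\<Prod>j\<in>{1..n}. 1 / (\<Sum>k\<in>subtree p j. u k))"

definition ext0 :: "nat \<Rightarrow> (nat \<Rightarrow> real) \<Rightarrow> nat \<Rightarrow> real" where
  "ext0 n u i = (if i = 0 then - (\<Sum>k\<in>{1..n}. u k) else u i)"

(* (sigma . g)(u_1,...,u_n) = g(u_{sigma 1},...,u_{sigma n}) *)
definition perm_pt :: "nat \<Rightarrow> (nat \<Rightarrow> nat) \<Rightarrow> (nat \<Rightarrow> real) \<Rightarrow> nat \<Rightarrow> real" where
  "perm_pt n \<sigma> u = (\<lambda>i. ext0 n u (\<sigma> i))"

(* generic points: no partial sum sum_{i in A} u_i (A nonempty proper subset of {0..n}) vanishes;
   all denominators involved are nonzero there, and this set is Zariski dense *)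
definition generic :: "nat \<Rightarrow> (nat \<Rightarrow> real) \<Rightarrow> bool" where
  "generic n u \<longleftrightarrow> (\<forall>A. A \<subseteq> {0..n} \<longrightarrow> A \<noteq> {} \<longrightarrow> A \<noteq> {0..n} \<longrightarrow> (\<Sum>i\<in>A. ext0 n u i) \<noteq> 0)"

(* signed forests: (eps, p) with eps in {1,-1}.
   anticyc_rel n sigma (eps,p) (eps',p')  <->  eps' f_{F'} = sigma . (eps f_F)
   (equality in Q(u_1..u_n), tested on the dense set of generic points) *)
definition anticyc_rel :: "nat \<Rightarrow> (nat \<Rightarrow> nat) \<Rightarrow> int \<times> (nat \<Rightarrow> nat option)
     \<Rightarrow> int \<times> (nat \<Rightarrow> nat option) \<Rightarrow> bool" where
  "anticyc_rel n \<sigma> x y \<longleftrightarrow>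
     (\<forall>u. generic n u \<longrightarrow>
        of_int (fst y) * fF n (snd y) u = of_int (fst x) * fF n (snd x) (perm_pt n \<sigma> u))"

(* signed rooted trees on {0..n}: (eps, edge set of 2-element sets, root) *)
type_synonym srtree = "int \<times> nat set set \<times> nat"

(* B_0(eps F) = eps B_+(0,F) *)
definition B0 :: "nat \<Rightarrow> int \<times> (nat \<Rightarrow> nat option) \<Rightarrow> srtree" where
  "B0 n x = (fst x,
     {{i, j} | i j. snd x i = Some j} \<union> {{0, j} | j. j \<in> {1..n} \<and> snd x j = None},
     0)"

definition relabel :: "(nat \<Rightarrow> nat) \<Rightarrow> srtree \<Rightarrow> srtree" where
  "relabel \<sigma> t = (case t of (e, E, r) \<Rightarrow> (e, (\<lambda>ed. \<sigma> ` ed) ` E, \<sigma> r))"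

(* generating relation of C(n+1): eps (T,r) = -eps (T,r') for r' adjacent to r *)
definition c_step :: "srtree \<Rightarrow> srtree \<Rightarrow> bool" where
  "c_step t t' = (case t of (e, E, r) \<Rightarrow> case t' of (e', E', r') \<Rightarrow>
      E' = E \<and> e' = - e \<and> r \<noteq> r' \<and> {r, r'} \<in> E)"

(* equality in C(n+1): the equivalence relation generated by c_step *)
definition C_eq :: "srtree \<Rightarrow> srtree \<Rightarrow> bool" where
  "C_eq = (sup c_step (c_step\<inverse>\<inverse>))\<^sup>*\<^sup>*"

end

theory Submission
  imports Defs "HOL-Computational_Algebra.Polynomial"
begin

text \<open>
  Adjoining a new root 0 turns a forest \<open>F\<close> on \<open>{1..n}\<close> into the rooted tree \<open>B\<^sub>+(0,F)\<close>
  on \<open>{0..n}\<close>, whose fraction (one factor \<open>1 / \<Sum>\<^sub>k u\<^sub>k\<close> per non-root vertex \<open>j\<close>, the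
  sum running over the subtree below \<open>j\<close>) is \<open>f\<^sub>F\<close>.  Relabelling by \<open>\<sigma>\<close> gives a tree rooted
  at \<open>\<sigma> 0\<close> whose fraction at \<open>u\<close> is \<open>f\<^sub>F\<close> at \<open>\<sigma>\<cdot>u\<close>.  Moving the root back to 0 one edge
  at a time keeps the edge set and, since \<open>u\<^sub>0 + \<dots> + u\<^sub>n = 0\<close>, only changes the sign of the
  fraction: the subtree below the old root is the complement of the subtree below the new
  one.  Each move is a generating relation of \<open>C(n+1)\<close>, so this yields a signed forest
  \<open>\<epsilon>''F''\<close> with the fraction of \<open>\<sigma>\<cdot>(\<epsilon>F)\<close> and with \<open>B\<^sub>0(\<epsilon>''F'') = \<sigma>\<cdot>B\<^sub>0(\<epsilon>F)\<close> in \<open>C(n+1)\<close>.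
  It remains that a signed forest is determined by its fraction: at a point where, among
  the subsets of \<open>{1..n}\<close>, only a given subtree has vanishing sum, the fraction of any
  forest containing that subtree has a pole, so the subtrees of two forests with the same
  fraction coincide.
\<close>

lemma rtrancl_mono_except_sink:
  assumes "(a, b) \<in> S\<^sup>*" "b \<noteq> z"
    and "\<And>x y. (x, y) \<in> S \<Longrightarrow> y \<noteq> z \<Longrightarrow> (x, y) \<in> R"
    and "\<And>y. (z, y) \<notin> S"
  shows "(a, b) \<in> R\<^sup>*"
  using assms(1,2)
proof (induction rule: converse_rtrancl_induct)
  case (step x y)
  have "y \<noteq> z" using step assms(4) by (metis converse_rtranclE)
  then show ?case using step assms(3) by (meson converse_rtrancl_into_rtrancl)
qed simp

lemma trancl_mono_except_sink:
  assumes "(a, b) \<in> S\<^sup>+" "b \<noteq> z"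
    and "\<And>x y. (x, y) \<in> S \<Longrightarrow> y \<noteq> z \<Longrightarrow> (x, y) \<in> R"
    and "\<And>y. (z, y) \<notin> S"
  shows "(a, b) \<in> R\<^sup>+"
proof -
  obtain y where ay: "(a, y) \<in> S" and yb: "(y, b) \<in> S\<^sup>*" using assms(1) by (meson tranclD)
  have "y \<noteq> z" using yb assms(2,4) by (metis converse_rtranclE)
  then have "(a, y) \<in> R" using assms(3) ay by blast
  with rtrancl_mono_except_sink[OF yb assms(2-4)] show ?thesis by (meson rtrancl_into_trancl2)
qed

lemma acyclic_mono_except_sink:
  assumes "acyclic R"
    and "\<And>x y. (x, y) \<in> S \<Longrightarrow> y \<noteq> z \<Longrightarrow> (x, y) \<in> R"
    and "\<And>y. (z, y) \<notin> S"
  shows "acyclic S"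
proof (rule acyclicI, intro allI notI)
  fix x assume cyc: "(x, x) \<in> S\<^sup>+"
  show False
  proof (cases "x = z")
    case True then show ?thesis using cyc assms(3) by (meson tranclD)
  next
    case False then show ?thesis
      using trancl_mono_except_sink[OF cyc False assms(2,3)] assms(1) by (simp add: acyclic_def)
  qed
qed

lemma rtrancl_map:
  assumes "(a, b) \<in> R\<^sup>*" "\<And>x y. (x, y) \<in> R \<Longrightarrow> (f x, f y) \<in> S"
  shows "(f a, f b) \<in> S\<^sup>*"
  using assms(1) by (induction rule: rtrancl_induct) (auto intro: rtrancl_into_rtrancl assms(2))

lemma trancl_map:
  assumes "(a, b) \<in> R\<^sup>+" "\<And>x y. (x, y) \<in> R \<Longrightarrow> (f x, f y) \<in> S"
  shows "(f a, f b) \<in> S\<^sup>+"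
  using assms(1) by (induction rule: trancl_induct) (auto intro: trancl_into_trancl assms(2))

lemma C_eq_refl: "C_eq x x"
  by (simp add: C_eq_def)

lemma C_eq_trans: "C_eq x y \<Longrightarrow> C_eq y z \<Longrightarrow> C_eq x z"
  unfolding C_eq_def by (rule rtranclp_trans)

lemma C_eq_sym: "C_eq x y \<Longrightarrow> C_eq y x"
  unfolding C_eq_def symclp_pointfree[symmetric] by (rule rtranclp_symclp_sym)

lemma C_eq_stepI: "c_step x y \<Longrightarrow> C_eq x y"
  unfolding C_eq_def by (rule r_into_rtranclp) simp

section \<open>Rooted trees and moving the root\<close>

lemma par_rel_iff [simp]: "(x, y) \<in> par_rel q \<longleftrightarrow> q x = Some y"
  by (simp add: par_rel_def)

lemma self_in_subtree [simp]: "j \<in> subtree q j"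
  by (simp add: subtree_def)

definition rooted_tree :: "nat set \<Rightarrow> nat \<Rightarrow> (nat \<Rightarrow> nat option) \<Rightarrow> bool" where
  "rooted_tree V r q \<longleftrightarrow> finite V \<and> r \<in> V \<and> q r = None \<and> (\<forall>x. x \<notin> V \<longrightarrow> q x = None)
     \<and> (\<forall>x\<in>V. x \<noteq> r \<longrightarrow> q x \<noteq> None) \<and> (\<forall>x y. q x = Some y \<longrightarrow> y \<in> V) \<and> acyclic (par_rel q)"

definition tree_edges :: "(nat \<Rightarrow> nat option) \<Rightarrow> nat set set" where
  "tree_edges q = {{j, m} | j m. q j = Some m}"

definition tree_fraction :: "nat set \<Rightarrow> (nat \<Rightarrow> nat option) \<Rightarrow> (nat \<Rightarrow> real) \<Rightarrow> real" where
  "tree_fraction V q e = (\<Prod>j\<in>{j\<in>V. q j \<noteq> None}. 1 / (\<Sum>k\<in>subtree q j. e k))"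

lemma subtree_subset:
  assumes "rooted_tree V r q" "j \<in> V"
  shows "subtree q j \<subseteq> V"
proof
  fix k assume "k \<in> subtree q j"
  then have "(k, j) \<in> (par_rel q)\<^sup>*" by (simp add: subtree_def)
  then show "k \<in> V"
    by (cases rule: converse_rtranclE) (use assms in \<open>auto simp: rooted_tree_def\<close>)
qed

lemma rooted_tree_reaches_root:
  assumes T: "rooted_tree V r q" and "k \<in> V"
  shows "(k, r) \<in> (par_rel q)\<^sup>*"
proof -
  have "par_rel q \<subseteq> V \<times> V" using T unfolding rooted_tree_def by auto
  then have "finite (par_rel q)" using T finite_subset unfolding rooted_tree_def by blast
  then have wf: "wf ((par_rel q)\<inverse>)"
    using finite_acyclic_wf_converse T unfolding rooted_tree_def by blast
  show ?thesis using \<open>k \<in> V\<close>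
  proof (induction k rule: wf_induct[OF wf])
    case (1 k)
    show ?case
    proof (cases "q k")
      case None then show ?thesis using 1 T unfolding rooted_tree_def by auto
    next
      case (Some y)
      then have "(y, r) \<in> (par_rel q)\<^sup>*" using 1 T unfolding rooted_tree_def by auto
      then show ?thesis using Some by (meson converse_rtrancl_into_rtrancl par_rel_iff)
    qed
  qed
qed

lemma rtrancl_from_parentless:
  assumes "q r = None" "(r, j) \<in> (par_rel q)\<^sup>*"
  shows "j = r"
  using assms(2) by (cases rule: converse_rtranclE) (use assms(1) in auto)

lemma tree_fraction_cong:
  assumes "rooted_tree V r q" "\<And>k. k \<in> V \<Longrightarrow> e k = e' k"
  shows "tree_fraction V q e = tree_fraction V q e'"
  unfolding tree_fraction_def
proof (rule prod.cong[OF refl])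
  fix j assume "j \<in> {j\<in>V. q j \<noteq> None}"
  then have "subtree q j \<subseteq> V" using subtree_subset[OF assms(1)] by blast
  then show "1 / (\<Sum>k\<in>subtree q j. e k) = 1 / (\<Sum>k\<in>subtree q j. e' k)"
    using assms(2) by (metis subsetD sum.cong)
qed

definition path_to_root :: "nat set \<Rightarrow> (nat \<Rightarrow> nat option) \<Rightarrow> nat \<Rightarrow> nat set" where
  "path_to_root V q z = {j\<in>V. q j \<noteq> None \<and> z \<in> subtree q j}"

definition flip_root :: "(nat \<Rightarrow> nat option) \<Rightarrow> nat \<Rightarrow> nat \<Rightarrow> nat \<Rightarrow> nat option" where
  "flip_root q r c = q(c := None, r := Some c)"

locale root_child =
  fixes V :: "nat set" and r c :: nat and q :: "nat \<Rightarrow> nat option"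
  assumes tree: "rooted_tree V r q" and child: "q c = Some r"
begin

abbreviation "q' \<equiv> flip_root q r c"

lemma root_ne_child: "r \<noteq> c"
  using child tree unfolding rooted_tree_def by auto

lemma child_in: "c \<in> V"
  using child tree unfolding rooted_tree_def by (metis option.distinct(1))

lemma root_in: "r \<in> V" and root_parentless: "q r = None" and finite_vertices: "finite V"
  using tree unfolding rooted_tree_def by auto

lemma flip_edge_to_old:
  "(x, y) \<in> par_rel q' \<Longrightarrow> y \<noteq> c \<Longrightarrow> (x, y) \<in> par_rel q"
  using root_parentless by (auto simp: flip_root_def split: if_splits)

lemma child_flip_parentless: "(c, y) \<notin> par_rel q'"
  using root_ne_child by (simp add: flip_root_def)

lemma old_edge_to_flip:
  "(x, y) \<in> par_rel q \<Longrightarrow> y \<noteq> r \<Longrightarrow> (x, y) \<in> par_rel q'"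
  using child root_parentless by (auto simp: flip_root_def)

lemma root_old_parentless: "(r, y) \<notin> par_rel q"
  using root_parentless by simp

lemma rooted_tree_flip: "rooted_tree V c q'"
  unfolding rooted_tree_def
proof (intro conjI)
  show "acyclic (par_rel q')"
    using tree acyclic_mono_except_sink[OF _ flip_edge_to_old child_flip_parentless]
    by (simp add: rooted_tree_def)
qed (use tree child_in root_ne_child child in \<open>auto simp: flip_root_def rooted_tree_def\<close>)

lemma tree_edges_flip: "tree_edges q' = tree_edges q"
proof (intro set_eqI iffI)
  fix x assume "x \<in> tree_edges q'"
  then obtain j m where x: "x = {j, m}" "q' j = Some m" unfolding tree_edges_def by auto
  then show "x \<in> tree_edges q"
    using child unfolding tree_edges_def
    by (cases "j = r") (auto simp: flip_root_def insert_commute split: if_splits)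
next
  fix x assume "x \<in> tree_edges q"
  then obtain j m where x: "x = {j, m}" "q j = Some m" unfolding tree_edges_def by auto
  show "x \<in> tree_edges q'"
  proof (cases "j = c")
    case True
    then have "m = r" "q' r = Some j" using x child by (simp_all add: flip_root_def)
    then show ?thesis using x unfolding tree_edges_def by (auto simp: insert_commute)
  next
    case False
    then have "j \<noteq> r" using x root_parentless by auto
    then show ?thesis using x False by (auto simp: flip_root_def tree_edges_def)
  qed
qed

lemma subtree_flip_other: "j \<noteq> r \<Longrightarrow> j \<noteq> c \<Longrightarrow> subtree q' j = subtree q j"
  unfolding subtree_def
  using rtrancl_mono_except_sink[OF _ _ flip_edge_to_old child_flip_parentless]
    rtrancl_mono_except_sink[OF _ _ old_edge_to_flip root_old_parentless]
  by blast

lemma subtree_flip_root_disjoint: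
  assumes "k \<in> subtree q' r"
  shows "k \<notin> subtree q c"
proof -
  have "(k, r) \<in> (par_rel q')\<^sup>*" using assms by (simp add: subtree_def)
  then show ?thesis
  proof (induction rule: converse_rtrancl_induct)
    case base
    then show ?case
      using rtrancl_from_parentless[of q r, OF root_parentless] root_ne_child by (auto simp: subtree_def)
  next
    case (step k y)
    show ?case
    proof
      assume k: "k \<in> subtree q c"
      show False
      proof (cases "k = r")
        case True
        then show False
          using k rtrancl_from_parentless[of q r, OF root_parentless] root_ne_child
          by (auto simp: subtree_def)
      next
        case False
        then have "q k = Some y" "k \<noteq> c" using step(1) by (auto simp: flip_root_def split: if_splits)
        moreover have "(k, c) \<in> (par_rel q)\<^sup>*" using k by (simp add: subtree_def)
        ultimately have "(y, c) \<in> (par_rel q)\<^sup>*" by (metis converse_rtranclE option.inject par_rel_iff)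
        then show False using step(3) by (simp add: subtree_def)
      qed
    qed
  qed
qed

lemma subtree_flip_root_complement:
  assumes "k \<in> V" "k \<notin> subtree q c"
  shows "k \<in> subtree q' r"
proof -
  have "(k, r) \<in> (par_rel q)\<^sup>*" using rooted_tree_reaches_root[OF tree assms(1)] .
  then have "k \<notin> subtree q c \<longrightarrow> (k, r) \<in> (par_rel q')\<^sup>*"
  proof (induction rule: converse_rtrancl_induct)
    case (step k y)
    show ?case
    proof
      assume k: "k \<notin> subtree q c"
      then have "y \<notin> subtree q c" using step(1)
        by (auto simp: subtree_def intro: converse_rtrancl_into_rtrancl)
      then have "(y, r) \<in> (par_rel q')\<^sup>*" using step by blast
      moreover have "(k, y) \<in> par_rel q'"
        using k step(1) root_parentless by (auto simp: flip_root_def)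
      ultimately show "(k, r) \<in> (par_rel q')\<^sup>*" by (meson converse_rtrancl_into_rtrancl)
    qed
  qed simp
  then show ?thesis using assms(2) by (simp add: subtree_def)
qed

lemma subtree_flip_root: "subtree q' r = V - subtree q c"
  using subtree_flip_root_disjoint subtree_flip_root_complement
    subtree_subset[OF rooted_tree_flip root_in]
  by blast

lemma tree_fraction_flip:
  assumes "(\<Sum>k\<in>V. e k) = 0"
  shows "tree_fraction V q' e = - tree_fraction V q e"
proof -
  let ?f = "\<lambda>q j. 1 / (\<Sum>k\<in>subtree q j. e k)"
  have "{j\<in>V. q j \<noteq> None} = insert c (V - {r, c})"
    using tree child_in root_ne_child unfolding rooted_tree_def by auto
  then have old: "tree_fraction V q e = ?f q c * (\<Prod>j\<in>V-{r, c}. ?f q j)"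
    unfolding tree_fraction_def using finite_vertices by simp
  have "{j\<in>V. q' j \<noteq> None} = insert r (V - {r, c})"
    using tree root_in root_ne_child unfolding rooted_tree_def flip_root_def by auto
  then have new: "tree_fraction V q' e = ?f q' r * (\<Prod>j\<in>V-{r, c}. ?f q' j)"
    unfolding tree_fraction_def using finite_vertices by simp
  have "(\<Prod>j\<in>V-{r, c}. ?f q' j) = (\<Prod>j\<in>V-{r, c}. ?f q j)"
    by (rule prod.cong) (use subtree_flip_other in auto)
  moreover have "(\<Sum>k\<in>subtree q' r. e k) = (\<Sum>k\<in>V. e k) - (\<Sum>k\<in>subtree q c. e k)"
    unfolding subtree_flip_root by (rule sum_diff[OF finite_vertices subtree_subset[OF tree child_in]])
  ultimately show ?thesis using old new assms by simp
qed

lemma path_to_root_flip_psubset: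
  assumes "z \<in> subtree q c"
  shows "path_to_root V q' z \<subset> path_to_root V q z"
proof -
  have "path_to_root V q' z \<subseteq> path_to_root V q z - {c}"
  proof
    fix j assume j: "j \<in> path_to_root V q' z"
    then have "j \<noteq> c" using root_ne_child by (auto simp: path_to_root_def flip_root_def)
    moreover have "j \<noteq> r" using j subtree_flip_root_disjoint assms by (auto simp: path_to_root_def)
    ultimately show "j \<in> path_to_root V q z - {c}"
      using j subtree_flip_other by (simp add: path_to_root_def flip_root_def)
  qed
  moreover have "c \<in> path_to_root V q z" using child_in child assms by (simp add: path_to_root_def)
  ultimately show ?thesis by blast
qed

lemma C_eq_flip: "C_eq (\<epsilon>, tree_edges q, r) (- \<epsilon>, tree_edges q, c)"
proof (rule C_eq_stepI)
  have "{c, r} \<in> tree_edges q" unfolding tree_edges_def using child by blast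
  then show "c_step (\<epsilon>, tree_edges q, r) (- \<epsilon>, tree_edges q, c)"
    using root_ne_child by (simp add: c_step_def insert_commute)
qed

end

lemma reroot:
  assumes "rooted_tree V r q" "z \<in> V"
  obtains q' s where "rooted_tree V z q'" "tree_edges q' = tree_edges q" "s \<in> {1, -1 :: int}"
    "\<And>e. (\<Sum>k\<in>V. e k) = 0 \<Longrightarrow> tree_fraction V q' e = of_int s * tree_fraction V q e"
    "\<And>\<epsilon>. C_eq (\<epsilon>, tree_edges q, r) (s * \<epsilon>, tree_edges q, z)"
  using assms
proof (induction "card (path_to_root V q z)" arbitrary: q r thesis rule: less_induct)
  case less
  note T = less.prems(2)
  show ?case
  proof (cases "z = r")
    case True
    show ?thesis
    proof (rule less.prems(1))
      show "rooted_tree V z q" using T True by simp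
      show "(1::int) \<in> {1, -1}" by simp
    qed (use True C_eq_refl in auto)
  next
    case False
    obtain c where zc: "(z, c) \<in> (par_rel q)\<^sup>*" and cr: "(c, r) \<in> par_rel q"
      using rooted_tree_reaches_root[OF T less.prems(3)] False by (meson rtranclE)
    interpret root_child V r c q using T cr by unfold_locales simp_all
    have "z \<in> subtree q c" using zc by (simp add: subtree_def)
    then have card_less: "card (path_to_root V q' z) < card (path_to_root V q z)"
      using finite_vertices
      by (intro psubset_card_mono path_to_root_flip_psubset) (simp add: path_to_root_def)
    obtain q0 s where IH: "rooted_tree V z q0" "tree_edges q0 = tree_edges q'" "s \<in> {1, -1}"
      "\<And>e. (\<Sum>k\<in>V. e k) = 0 \<Longrightarrow> tree_fraction V q0 e = of_int s * tree_fraction V q' e"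
      "\<And>\<epsilon>. C_eq (\<epsilon>, tree_edges q', c) (s * \<epsilon>, tree_edges q', z)"
      by (erule less.hyps[OF card_less _ rooted_tree_flip less.prems(3)])
    show ?thesis
    proof (rule less.prems(1))
      show "rooted_tree V z q0" by (rule IH(1))
      show "- s \<in> {1, -1}" using IH(3) by auto
      show "tree_fraction V q0 e = of_int (- s) * tree_fraction V q e" if "(\<Sum>k\<in>V. e k) = 0" for e
        using IH(4)[OF that] tree_fraction_flip[OF that] by simp
      show "C_eq (\<epsilon>, tree_edges q, r) (- s * \<epsilon>, tree_edges q, z)" for \<epsilon>
        using C_eq_trans[OF C_eq_flip IH(5)[of "- \<epsilon>", unfolded tree_edges_flip]] by simp
    qed (use IH(2) tree_edges_flip in simp)
  qed
qed

section \<open>Forests as trees rooted at 0\<close>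

lemma forest_parent_range:
  "is_forest n p \<Longrightarrow> p i = Some j \<Longrightarrow> i \<in> {1..n} \<and> j \<in> {1..n}"
  unfolding is_forest_def by (metis option.distinct(1))

lemma forest_acyclic: "is_forest n p \<Longrightarrow> acyclic (par_rel p)"
  unfolding is_forest_def acyclic_def by blast

lemma subtree_forest_subset:
  assumes "is_forest n p" "j \<in> {1..n}"
  shows "subtree p j \<subseteq> {1..n}"
proof
  fix k assume "k \<in> subtree p j"
  then have "(k, j) \<in> (par_rel p)\<^sup>*" by (simp add: subtree_def)
  then show "k \<in> {1..n}"
    by (cases rule: converse_rtranclE) (use assms forest_parent_range in auto)
qed

definition graft0 :: "nat \<Rightarrow> (nat \<Rightarrow> nat option) \<Rightarrow> nat \<Rightarrow> nat option" where
  "graft0 n p j = (if j \<in> {1..n} then Some (case p j of None \<Rightarrow> 0 | Some m \<Rightarrow> m) else None)"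

lemma graft0_edge_to_forest:
  "(x, y) \<in> par_rel (graft0 n p) \<Longrightarrow> y \<noteq> 0 \<Longrightarrow> (x, y) \<in> par_rel p"
  by (auto simp: graft0_def split: if_splits option.splits)

lemma graft0_root_parentless: "(0, y) \<notin> par_rel (graft0 n p)"
  by (simp add: graft0_def)

lemma rooted_tree_graft0:
  assumes "is_forest n p"
  shows "rooted_tree {0..n} 0 (graft0 n p)"
  unfolding rooted_tree_def
proof (intro conjI)
  show "acyclic (par_rel (graft0 n p))"
    by (rule acyclic_mono_except_sink[OF forest_acyclic[OF assms]
          graft0_edge_to_forest graft0_root_parentless])
qed (use assms forest_parent_range in \<open>auto simp: graft0_def split: option.splits\<close>)

lemma tree_edges_graft0:
  assumes "is_forest n p"
  shows "tree_edges (graft0 n p) =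
    {{i, j} | i j. p i = Some j} \<union> {{0, j} | j. j \<in> {1..n} \<and> p j = None}"
proof (intro set_eqI iffI)
  fix x assume "x \<in> tree_edges (graft0 n p)"
  then obtain j m where "x = {j, m}" "graft0 n p j = Some m" unfolding tree_edges_def by auto
  then show "x \<in> {{i, j} | i j. p i = Some j} \<union> {{0, j} | j. j \<in> {1..n} \<and> p j = None}"
    by (cases "p j") (auto simp: graft0_def insert_commute split: if_splits)
next
  fix x assume "x \<in> {{i, j} | i j. p i = Some j} \<union> {{0, j} | j. j \<in> {1..n} \<and> p j = None}"
  then consider i j where "x = {i, j}" "p i = Some j" | j where "x = {j, 0}" "j \<in> {1..n}" "p j = None"
    by (auto simp: insert_commute)
  then show "x \<in> tree_edges (graft0 n p)"
  proof cases
    case (1 i j)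
    then have "graft0 n p i = Some j" using forest_parent_range[OF assms] by (simp add: graft0_def)
    then show ?thesis using 1 unfolding tree_edges_def by blast
  next
    case (2 j)
    then have "graft0 n p j = Some 0" by (simp add: graft0_def)
    then show ?thesis using 2 unfolding tree_edges_def by blast
  qed
qed

lemma B0_eq_graft0: "is_forest n p \<Longrightarrow> B0 n (\<epsilon>, p) = (\<epsilon>, tree_edges (graft0 n p), 0)"
  by (simp add: B0_def tree_edges_graft0)

lemma subtree_graft0:
  assumes "is_forest n p" "j \<in> {1..n}"
  shows "subtree (graft0 n p) j = subtree p j"
proof (intro set_eqI iffI)
  fix k assume "k \<in> subtree (graft0 n p) j"
  moreover have "j \<noteq> 0" using assms(2) by simp
  ultimately show "k \<in> subtree p j"
    using rtrancl_mono_except_sink[OF _ _ graft0_edge_to_forest graft0_root_parentless]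
    by (simp add: subtree_def)
next
  have "par_rel p \<subseteq> par_rel (graft0 n p)"
    using forest_parent_range[OF assms(1)] by (auto simp: graft0_def)
  then show "k \<in> subtree (graft0 n p) j" if "k \<in> subtree p j" for k
    using that rtrancl_mono by (auto simp: subtree_def)
qed

lemma tree_fraction_graft0:
  assumes "is_forest n p"
  shows "tree_fraction {0..n} (graft0 n p) (ext0 n u) = fF n p u"
proof -
  have "{j\<in>{0..n}. graft0 n p j \<noteq> None} = {1..n}" by (auto simp: graft0_def)
  moreover have "(\<Sum>k\<in>subtree (graft0 n p) j. ext0 n u k) = (\<Sum>k\<in>subtree p j. u k)"
    if "j \<in> {1..n}" for j
    using subtree_graft0[OF assms that] subtree_forest_subset[OF assms that]
    by (intro sum.cong) (auto simp: ext0_def)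
  ultimately show ?thesis unfolding tree_fraction_def fF_def by simp
qed

lemma rooted_tree_0_eq_graft0:
  assumes T: "rooted_tree {0..n} 0 q"
  obtains p where "is_forest n p" "graft0 n p = q"
proof
  define p where "p j = (if q j = Some 0 then None else q j)" for j
  have sub: "par_rel p \<subseteq> par_rel q" by (auto simp: p_def split: if_splits)
  show "is_forest n p"
    unfolding is_forest_def
  proof (intro conjI allI impI)
    show "(i, i) \<notin> (par_rel p)\<^sup>+" for i
      using T trancl_mono[OF _ sub] unfolding rooted_tree_def acyclic_def by blast
    show "p i = None" if "i \<notin> {1..n}" for i
      using that T unfolding rooted_tree_def p_def by (cases "i = 0") auto
    show "j \<in> {1..n}" if "p i = Some j" for i j
      using that T unfolding rooted_tree_def p_def by (auto split: if_splits)
  qed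
  show "graft0 n p = q"
  proof
    fix j show "graft0 n p j = q j"
      using T unfolding rooted_tree_def graft0_def p_def
      by (cases "j \<in> {1..n}"; cases "j = 0") (auto split: option.splits)
  qed
qed

lemma ext0_sum: "(\<Sum>i\<in>{0..n}. ext0 n u i) = 0"
proof -
  have "(\<Sum>i\<in>{0..n}. ext0 n u i) = ext0 n u 0 + (\<Sum>i\<in>{1..n}. ext0 n u i)"
    by (simp add: sum.atLeast_Suc_atMost)
  also have "(\<Sum>i\<in>{1..n}. ext0 n u i) = (\<Sum>i\<in>{1..n}. u i)"
    by (intro sum.cong) (auto simp: ext0_def)
  finally show ?thesis by (simp add: ext0_def)
qed

lemma rooted_tree_signed_forest:
  assumes "rooted_tree {0..n} r q"
  obtains p s where "is_forest n p" "s \<in> {1, -1 :: int}" "tree_edges (graft0 n p) = tree_edges q"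
    "\<And>u. tree_fraction {0..n} q (ext0 n u) = of_int s * fF n p u"
    "\<And>\<epsilon>. C_eq (\<epsilon>, tree_edges q, r) (s * \<epsilon>, tree_edges q, 0)"
proof -
  obtain q0 s where q0: "rooted_tree {0..n} 0 q0" "tree_edges q0 = tree_edges q" "s \<in> {1, -1}"
    and frac: "\<And>e. (\<Sum>k\<in>{0..n}. e k) = 0 \<Longrightarrow>
      tree_fraction {0..n} q0 e = of_int s * tree_fraction {0..n} q e"
    and C: "\<And>\<epsilon>. C_eq (\<epsilon>, tree_edges q, r) (s * \<epsilon>, tree_edges q, 0)"
    by (erule reroot[OF assms, rotated]) simp
  obtain p where p: "is_forest n p" "graft0 n p = q0" using rooted_tree_0_eq_graft0[OF q0(1)] .
  show ?thesis
  proof (rule that[OF p(1) q0(3) _ _ C])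
    show "tree_edges (graft0 n p) = tree_edges q" using p(2) q0(2) by simp
    show "tree_fraction {0..n} q (ext0 n u) = of_int s * fF n p u" for u
      using frac[OF ext0_sum] tree_fraction_graft0[OF p(1), of u] p(2) q0(3) by auto
  qed
qed

section \<open>Relabelling\<close>

definition relabel_tree :: "(nat \<Rightarrow> nat) \<Rightarrow> (nat \<Rightarrow> nat option) \<Rightarrow> nat \<Rightarrow> nat option" where
  "relabel_tree \<sigma> q x = map_option \<sigma> (q (inv \<sigma> x))"

context
  fixes \<sigma> :: "nat \<Rightarrow> nat"
  assumes bij: "bij \<sigma>"
begin

lemma relabel_tree_Some: "relabel_tree \<sigma> q x = Some y \<longleftrightarrow> q (inv \<sigma> x) = Some (inv \<sigma> y)"
  unfolding relabel_tree_def map_option_eq_Some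
  by (metis bij bij_inv_eq_iff)

lemma relabel_tree_None: "relabel_tree \<sigma> q x = None \<longleftrightarrow> q (inv \<sigma> x) = None"
  by (simp add: relabel_tree_def)

lemma subtree_relabel_tree: "subtree (relabel_tree \<sigma> q) (\<sigma> j) = \<sigma> ` subtree q j"
proof (intro set_eqI iffI)
  fix k assume "k \<in> subtree (relabel_tree \<sigma> q) (\<sigma> j)"
  then have "(k, \<sigma> j) \<in> (par_rel (relabel_tree \<sigma> q))\<^sup>*" by (simp add: subtree_def)
  then have "(inv \<sigma> k, inv \<sigma> (\<sigma> j)) \<in> (par_rel q)\<^sup>*"
    by (rule rtrancl_map[where f = "inv \<sigma>"]) (simp add: relabel_tree_Some)
  moreover have "inv \<sigma> (\<sigma> j) = j" "k = \<sigma> (inv \<sigma> k)"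
    using bij by (simp_all add: bij_is_inj bij_is_surj surj_f_inv_f)
  ultimately show "k \<in> \<sigma> ` subtree q j" by (auto simp: subtree_def)
next
  fix k assume "k \<in> \<sigma> ` subtree q j"
  then obtain k' where k': "k = \<sigma> k'" "(k', j) \<in> (par_rel q)\<^sup>*" by (auto simp: subtree_def)
  from k'(2) have "(\<sigma> k', \<sigma> j) \<in> (par_rel (relabel_tree \<sigma> q))\<^sup>*"
    by (rule rtrancl_map[where f = \<sigma>]) (simp add: relabel_tree_Some bij bij_is_inj)
  then show "k \<in> subtree (relabel_tree \<sigma> q) (\<sigma> j)" using k'(1) by (simp add: subtree_def)
qed

lemma rooted_tree_relabel_tree:
  assumes T: "rooted_tree V r q" and img: "\<sigma> ` V = V"
  shows "rooted_tree V (\<sigma> r) (relabel_tree \<sigma> q)"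
proof -
  have inV: "inv \<sigma> x \<in> V \<longleftrightarrow> x \<in> V" for x
    using img bij by (metis bij_inv_eq_iff image_iff)
  have "acyclic (par_rel (relabel_tree \<sigma> q))"
  proof (rule acyclicI, intro allI notI)
    fix x assume "(x, x) \<in> (par_rel (relabel_tree \<sigma> q))\<^sup>+"
    then have "(inv \<sigma> x, inv \<sigma> x) \<in> (par_rel q)\<^sup>+"
      by (rule trancl_map[where f = "inv \<sigma>"]) (simp add: relabel_tree_Some)
    then show False using T unfolding rooted_tree_def acyclic_def by blast
  qed
  moreover have "relabel_tree \<sigma> q (\<sigma> r) = None"
    using T bij by (simp add: relabel_tree_None bij_is_inj rooted_tree_def)
  moreover have "\<sigma> r \<in> V" using T img by (auto simp: rooted_tree_def)
  moreover have "relabel_tree \<sigma> q x = None \<longleftrightarrow> x \<notin> V \<or> x = \<sigma> r" for x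
    using T inV[of x] bij unfolding rooted_tree_def relabel_tree_None
    by (metis bij_inv_eq_iff)
  moreover have "y \<in> V" if "relabel_tree \<sigma> q x = Some y" for x y
    using that T inV[of y] unfolding rooted_tree_def relabel_tree_Some by blast
  ultimately show ?thesis
    using T unfolding rooted_tree_def by blast
qed

lemma tree_edges_relabel_tree: "tree_edges (relabel_tree \<sigma> q) = (\<lambda>ed. \<sigma> ` ed) ` tree_edges q"
proof (intro set_eqI iffI)
  fix x assume "x \<in> tree_edges (relabel_tree \<sigma> q)"
  then obtain j m where "x = {j, m}" "q (inv \<sigma> j) = Some (inv \<sigma> m)"
    unfolding tree_edges_def relabel_tree_Some by blast
  moreover have "{j, m} = \<sigma> ` {inv \<sigma> j, inv \<sigma> m}"
    using bij by (simp add: bij_is_surj surj_f_inv_f)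
  ultimately show "x \<in> (\<lambda>ed. \<sigma> ` ed) ` tree_edges q" unfolding tree_edges_def by blast
next
  fix x assume "x \<in> (\<lambda>ed. \<sigma> ` ed) ` tree_edges q"
  then obtain j m where "x = {\<sigma> j, \<sigma> m}" "q j = Some m" unfolding tree_edges_def by auto
  moreover have "relabel_tree \<sigma> q (\<sigma> j) = Some (\<sigma> m)"
    using calculation(2) bij by (simp add: relabel_tree_Some bij_is_inj)
  ultimately show "x \<in> tree_edges (relabel_tree \<sigma> q)" unfolding tree_edges_def by blast
qed

lemma tree_fraction_relabel_tree:
  assumes "\<sigma> ` V = V"
  shows "tree_fraction V (relabel_tree \<sigma> q) e = tree_fraction V q (e \<circ> \<sigma>)"
proof -
  have inj: "inj \<sigma>" using bij bij_is_inj by auto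
  have "{j\<in>V. relabel_tree \<sigma> q j \<noteq> None} = \<sigma> ` {j\<in>V. q j \<noteq> None}"
  proof (intro set_eqI iffI)
    fix x assume "x \<in> {j\<in>V. relabel_tree \<sigma> q j \<noteq> None}"
    then have "inv \<sigma> x \<in> {j\<in>V. q j \<noteq> None}" "x = \<sigma> (inv \<sigma> x)"
      using assms bij by (auto simp: relabel_tree_None bij_is_surj surj_f_inv_f)
        (metis bij bij_inv_eq_iff image_iff)
    then show "x \<in> \<sigma> ` {j\<in>V. q j \<noteq> None}" by blast
  next
    fix x assume "x \<in> \<sigma> ` {j\<in>V. q j \<noteq> None}"
    then show "x \<in> {j\<in>V. relabel_tree \<sigma> q j \<noteq> None}"
      using assms inj by (auto simp: relabel_tree_None)
  qed
  then show ?thesis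
    unfolding tree_fraction_def
    by (simp add: prod.reindex[OF inj_on_subset[OF inj]] subtree_relabel_tree
        sum.reindex[OF inj_on_subset[OF inj]])
qed

end

lemma ext0_perm_pt:
  assumes \<sigma>: "\<sigma> permutes {0..n}" and k: "k \<in> {0..n}"
  shows "ext0 n (perm_pt n \<sigma> u) k = ext0 n u (\<sigma> k)"
proof (cases "k = 0")
  case True
  have "(\<Sum>i\<in>{0..n}. ext0 n u (\<sigma> i)) = 0"
    using sum.permute[OF \<sigma>, of "ext0 n u"] ext0_sum[of n u] by (simp add: comp_def)
  then have "ext0 n u (\<sigma> 0) + (\<Sum>i\<in>{1..n}. ext0 n u (\<sigma> i)) = 0"
    by (simp add: sum.atLeast_Suc_atMost)
  then show ?thesis using True by (simp add: ext0_def perm_pt_def)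
qed (simp add: ext0_def perm_pt_def)

lemma fF_perm_pt:
  assumes \<sigma>: "\<sigma> permutes {0..n}" and F: "is_forest n p"
  shows "fF n p (perm_pt n \<sigma> u) = tree_fraction {0..n} (relabel_tree \<sigma> (graft0 n p)) (ext0 n u)"
proof -
  have "fF n p (perm_pt n \<sigma> u) = tree_fraction {0..n} (graft0 n p) (ext0 n (perm_pt n \<sigma> u))"
    using tree_fraction_graft0[OF F] by simp
  also have "\<dots> = tree_fraction {0..n} (graft0 n p) (ext0 n u \<circ> \<sigma>)"
    using ext0_perm_pt[OF \<sigma>] by (intro tree_fraction_cong[OF rooted_tree_graft0[OF F]]) simp
  also have "\<dots> = tree_fraction {0..n} (relabel_tree \<sigma> (graft0 n p)) (ext0 n u)"
    using tree_fraction_relabel_tree permutes_bij[OF \<sigma>] permutes_image[OF \<sigma>] by simp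
  finally show ?thesis .
qed

section \<open>Generic points\<close>

lemma sum_ext0_complement:
  assumes "A \<subseteq> {0..n}"
  shows "(\<Sum>i\<in>A. ext0 n u i) = - (\<Sum>i\<in>{0..n} - A. ext0 n u i)"
  using sum.subset_diff[OF assms, of "ext0 n u"] ext0_sum[of n u] by simp

lemma generic_if_pos:
  assumes pos: "\<And>i. i \<in> {1..n} \<Longrightarrow> 0 < u i"
  shows "generic n u"
  unfolding generic_def
proof (intro allI impI)
  have sum_pos: "0 < (\<Sum>i\<in>B. ext0 n u i)" if "B \<subseteq> {0..n}" "B \<noteq> {}" "0 \<notin> B" for B
  proof (rule sum_pos)
    have B1: "B \<subseteq> {1..n}" using that by (auto simp: subset_iff Suc_le_eq intro!: gr0I)
    then show "finite B" using finite_subset by blast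
    show "0 < ext0 n u i" if "i \<in> B" for i using B1 that pos by (auto simp: ext0_def)
  qed (use that in simp)
  fix A assume A: "A \<subseteq> {0..n}" "A \<noteq> {}" "A \<noteq> {0..n}"
  show "(\<Sum>i\<in>A. ext0 n u i) \<noteq> 0"
  proof (cases "0 \<in> A")
    case True
    then have "0 < (\<Sum>i\<in>{0..n} - A. ext0 n u i)" using A by (intro sum_pos) auto
    then show ?thesis using sum_ext0_complement[OF A(1)] by simp
  next
    case False
    then show ?thesis using sum_pos[OF A(1,2)] by simp
  qed
qed

lemma ext0_line: "ext0 n (\<lambda>i. a i + t * b i) k = ext0 n a k + t * ext0 n b k"
  by (simp add: ext0_def sum.distrib sum_distrib_left)

lemma finite_nongeneric_on_line:
  assumes "generic n b"
  shows "finite {t. \<not> generic n (\<lambda>i. a i + t * b i)}"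
proof (rule finite_subset)
  let ?root = "\<lambda>A. - (\<Sum>i\<in>A. ext0 n a i) / (\<Sum>i\<in>A. ext0 n b i)"
  show "{t. \<not> generic n (\<lambda>i. a i + t * b i)} \<subseteq> ?root ` Pow {0..n}"
  proof
    fix t assume "t \<in> {t. \<not> generic n (\<lambda>i. a i + t * b i)}"
    then obtain A where A: "A \<subseteq> {0..n}" "A \<noteq> {}" "A \<noteq> {0..n}"
      and "(\<Sum>i\<in>A. ext0 n (\<lambda>i. a i + t * b i) i) = 0"
      unfolding generic_def by blast
    then have "(\<Sum>i\<in>A. ext0 n a i) + t * (\<Sum>i\<in>A. ext0 n b i) = 0"
      by (simp add: ext0_line sum.distrib sum_distrib_left)
    moreover have "(\<Sum>i\<in>A. ext0 n b i) \<noteq> 0" using assms A unfolding generic_def by blast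
    ultimately have "t = ?root A" by (simp add: field_simps)
    then show "t \<in> ?root ` Pow {0..n}" using A(1) by blast
  qed
qed simp

lemma prod_sums_on_line:
  "(\<Prod>j\<in>J. \<Sum>k\<in>X j. a k + t * b k) = poly (\<Prod>j\<in>J. [:\<Sum>k\<in>X j. a k, \<Sum>k\<in>X j. b k:]) t"
  by (simp add: poly_prod sum.distrib sum_distrib_left algebra_simps)

text \<open>
  Along the line \<open>a + t(1,\<dots>,1)\<close>, which consists of generic points for all but finitely many \<open>t\<close>,
  both sides are polynomials in \<open>t\<close>.
\<close>
lemma generic_prod_identity_extends:
  fixes c1 c2 :: real
  assumes "\<And>u. generic n u \<Longrightarrow>
     c1 * (\<Prod>j\<in>J. \<Sum>k\<in>X j. u k) = c2 * (\<Prod>j\<in>J. \<Sum>k\<in>Y j. u k)"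
  shows "c1 * (\<Prod>j\<in>J. \<Sum>k\<in>X j. a k) = c2 * (\<Prod>j\<in>J. \<Sum>k\<in>Y j. a k)"
proof -
  define b :: "nat \<Rightarrow> real" where "b = (\<lambda>_. 1)"
  let ?line = "\<lambda>t i. a i + t * b i"
  define R where "R = smult c1 (\<Prod>j\<in>J. [:\<Sum>k\<in>X j. a k, \<Sum>k\<in>X j. b k:])
     - smult c2 (\<Prod>j\<in>J. [:\<Sum>k\<in>Y j. a k, \<Sum>k\<in>Y j. b k:])"
  have R_eval: "poly R t = c1 * (\<Prod>j\<in>J. \<Sum>k\<in>X j. ?line t k) - c2 * (\<Prod>j\<in>J. \<Sum>k\<in>Y j. ?line t k)"
    for t unfolding R_def by (simp add: prod_sums_on_line)
  have "generic n b" unfolding b_def by (rule generic_if_pos) simp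
  then have "finite {t. \<not> generic n (?line t)}" by (rule finite_nongeneric_on_line)
  then have "infinite {t. generic n (?line t)}"
    by (metis (mono_tags) Collect_neg_eq finite_Collect_not infinite_UNIV_char_0)
  moreover have "{t. generic n (?line t)} \<subseteq> {t. poly R t = 0}" using assms R_eval by auto
  ultimately have "R = 0" using poly_roots_finite finite_subset by blast
  then show ?thesis using R_eval[of 0] by simp
qed

definition isolating_point :: "nat \<Rightarrow> nat set \<Rightarrow> nat \<Rightarrow> nat \<Rightarrow> real" where
  "isolating_point n A j i = (if i = j then 1 - real (card A) else if i \<in> A then 1 else real n + 1)"

lemma isolating_point_sum_subset:
  assumes "finite A" "C \<subseteq> A"
  shows "(\<Sum>i\<in>C. isolating_point n A j i) =
    (if j \<in> C then 1 - real (card A) else 0) + real (card (C - {j}))"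
proof -
  have fC: "finite C" using assms finite_subset by blast
  have rest: "(\<Sum>i\<in>C - {j}. isolating_point n A j i) = real (card (C - {j}))"
    using assms(2) by (simp add: isolating_point_def subset_iff)
  show ?thesis
  proof (cases "j \<in> C")
    case True
    then show ?thesis using rest fC by (simp add: sum.remove isolating_point_def)
  qed (use rest in simp)
qed

lemma isolating_point_sum_self:
  assumes "finite A" "j \<in> A"
  shows "(\<Sum>i\<in>A. isolating_point n A j i) = 0"
proof -
  have "card A \<ge> 1" using assms card_0_eq by fastforce
  then show ?thesis
    using isolating_point_sum_subset[OF assms(1) order.refl, of n j] assms by (simp add: of_nat_diff)
qed

text \<open>Weights outside \<open>A\<close> are too large to be compensated by the single negative weight.\<close>
lemma isolating_point_sum_eq_0:
  assumes A: "A \<subseteq> {1..n}" "j \<in> A" and B: "B \<subseteq> {1..n}"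
    and zero: "(\<Sum>i\<in>B. isolating_point n A j i) = 0"
  shows "B = {} \<or> B = A"
proof -
  have fA: "finite A" and fB: "finite B" using A B finite_subset by blast+
  have cA: "1 \<le> card A" "card A \<le> n"
    using card_mono[OF _ A(1)] fA A(2) card_0_eq by fastforce+
  have "(\<Sum>i\<in>B - A. isolating_point n A j i) = (\<Sum>i\<in>B - A. real n + 1)"
    by (rule sum.cong) (use A(2) in \<open>auto simp: isolating_point_def\<close>)
  then have outside: "(\<Sum>i\<in>B - A. isolating_point n A j i) = (real n + 1) * real (card (B - A))"
    by simp
  have "(\<Sum>i\<in>B \<inter> A. isolating_point n A j i) \<ge> 1 - real n"
    using isolating_point_sum_subset[OF fA, of "B \<inter> A" n j] cA by auto
  moreover have "(\<Sum>i\<in>B. isolating_point n A j i) =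
      (\<Sum>i\<in>B \<inter> A. isolating_point n A j i) + (\<Sum>i\<in>B - A. isolating_point n A j i)"
    using fB by (simp add: sum.Int_Diff)
  ultimately have "(real n + 1) * real (card (B - A)) < real n + 1" using zero outside
    by linarith
  then have "card (B - A) = 0"
    using mult_less_cancel_left_pos[of "real n + 1" "real (card (B - A))" 1] by simp
  then have BA: "B \<subseteq> A" using fB by auto
  show ?thesis
  proof (cases "j \<in> B")
    case False
    then show ?thesis using isolating_point_sum_subset[OF fA BA, of n j] zero fB by simp
  next
    case True
    then have "card (B - {j}) = card (A - {j})"
      using isolating_point_sum_subset[OF fA BA, of n j] zero cA fA A(2) by (simp add: of_nat_diff)
    then have "B - {j} = A - {j}" using BA fA by (meson card_subset_eq finite_Diff Diff_mono order_refl)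
    then show ?thesis using True A(2) by blast
  qed
qed

section \<open>A signed forest is determined by its fraction\<close>

lemma forest_subtree_psubset:
  assumes F: "is_forest n p" and k: "k \<in> subtree p j" "k \<noteq> j"
  shows "subtree p k \<subset> subtree p j"
proof -
  have kj: "(k, j) \<in> (par_rel p)\<^sup>*" using k by (simp add: subtree_def)
  then have "subtree p k \<subseteq> subtree p j" by (auto simp: subtree_def)
  moreover have "j \<notin> subtree p k"
  proof
    assume "j \<in> subtree p k"
    then have "(j, k) \<in> (par_rel p)\<^sup>+" using k(2) by (simp add: subtree_def rtrancl_eq_or_trancl)
    then have "(j, j) \<in> (par_rel p)\<^sup>+" using kj by (meson trancl_rtrancl_trancl)
    then show False using F by (simp add: is_forest_def)
  qed
  ultimately show ?thesis by auto
qed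

text \<open>
  If \<open>subtree p\<^sub>1 j = subtree p\<^sub>2 k\<close> with \<open>k \<noteq> j\<close>, then \<open>k\<close> lies strictly below \<open>j\<close> in \<open>p\<^sub>1\<close>,
  and the smaller subtree \<open>subtree p\<^sub>1 k\<close> already equals \<open>subtree p\<^sub>2 k\<close>: a contradiction.
\<close>
lemma forest_subtrees_eq:
  assumes F: "is_forest n p1"
    and H: "\<And>j. j \<in> {1..n} \<Longrightarrow> \<exists>k\<in>{1..n}. subtree p1 j = subtree p2 k"
    and j: "j \<in> {1..n}"
  shows "subtree p1 j = subtree p2 j"
  using j
proof (induction "card (subtree p1 j)" arbitrary: j rule: less_induct)
  case less
  obtain k where k: "k \<in> {1..n}" "subtree p1 j = subtree p2 k" using H[OF less.prems] by blast
  show ?case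
  proof (cases "k = j")
    case False
    have "k \<in> subtree p1 j" using k(2) by simp
    then have ps: "subtree p1 k \<subset> subtree p1 j" using forest_subtree_psubset[OF F] False by blast
    moreover have "finite (subtree p1 j)"
      using subtree_forest_subset[OF F less.prems] finite_subset by blast
    ultimately have "subtree p1 k = subtree p2 k"
      using less.hyps k(1) psubset_card_mono by blast
    then show ?thesis using ps k by simp
  qed (use k in simp)
qed

lemma forest_parent_iff:
  assumes F: "is_forest n p"
  shows "p i = Some m \<longleftrightarrow> (i, m) \<in> (par_rel p)\<^sup>* \<and> i \<noteq> m \<and>
     (\<forall>k. (i, k) \<in> (par_rel p)\<^sup>* \<and> i \<noteq> k \<longrightarrow> (m, k) \<in> (par_rel p)\<^sup>*)"
proof -
  have no_loop: "p i \<noteq> Some i"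
    using F unfolding is_forest_def by (metis par_rel_iff r_into_trancl)
  show ?thesis
  proof (intro iffI conjI allI impI)
    assume m: "p i = Some m"
    show "(i, m) \<in> (par_rel p)\<^sup>*" "i \<noteq> m" using m no_loop by auto
    fix k assume "(i, k) \<in> (par_rel p)\<^sup>* \<and> i \<noteq> k"
    then obtain y where "(i, y) \<in> par_rel p" "(y, k) \<in> (par_rel p)\<^sup>*"
      by (meson converse_rtranclE)
    then show "(m, k) \<in> (par_rel p)\<^sup>*" using m by simp
  next
    assume above: "(i, m) \<in> (par_rel p)\<^sup>* \<and> i \<noteq> m \<and>
      (\<forall>k. (i, k) \<in> (par_rel p)\<^sup>* \<and> i \<noteq> k \<longrightarrow> (m, k) \<in> (par_rel p)\<^sup>*)"
    then have "(i, m) \<in> (par_rel p)\<^sup>*" "i \<noteq> m" by simp_all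
    then obtain y where y: "p i = Some y" "(y, m) \<in> (par_rel p)\<^sup>*"
      by (metis converse_rtranclE par_rel_iff)
    have "(i, y) \<in> (par_rel p)\<^sup>*" "i \<noteq> y" using y(1) no_loop by auto
    then have my: "(m, y) \<in> (par_rel p)\<^sup>*" using above by blast
    have "y = m"
    proof (rule ccontr)
      assume "y \<noteq> m"
      then have "(y, m) \<in> (par_rel p)\<^sup>+" using y(2) by (simp add: rtrancl_eq_or_trancl)
      then have "(y, y) \<in> (par_rel p)\<^sup>+" using my by (rule trancl_rtrancl_trancl)
      then show False using F by (simp add: is_forest_def)
    qed
    then show "p i = Some m" using y by simp
  qed
qed

lemma forest_eqI_subtree:
  assumes F1: "is_forest n p1" and F2: "is_forest n p2"
    and S: "\<And>j. j \<in> {1..n} \<Longrightarrow> subtree p1 j = subtree p2 j"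
  shows "p1 = p2"
proof -
  have trivial_outside: "a = b"
    if "is_forest n p" "b \<notin> {1..n}" "(a, b) \<in> (par_rel p)\<^sup>*" for p a b
    using that(3) by (cases rule: rtranclE) (use that forest_parent_range in auto)
  have "(a, b) \<in> (par_rel p1)\<^sup>* \<longleftrightarrow> (a, b) \<in> (par_rel p2)\<^sup>*" for a b
  proof (cases "b \<in> {1..n}")
    case True then show ?thesis using S[OF True] unfolding subtree_def by blast
  next
    case False then show ?thesis using trivial_outside[OF F1 False] trivial_outside[OF F2 False] by blast
  qed
  then have "p1 i = Some m \<longleftrightarrow> p2 i = Some m" for i m
    using forest_parent_iff[OF F1] forest_parent_iff[OF F2] by presburger
  then show ?thesis by (metis not_None_eq ext)
qed

lemma subtree_sum_nonzero:
  assumes F: "is_forest n p" and j: "j \<in> {1..n}" and g: "generic n u"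
  shows "(\<Sum>k\<in>subtree p j. u k) \<noteq> 0"
proof -
  have sub: "subtree p j \<subseteq> {1..n}" by (rule subtree_forest_subset[OF F j])
  then have "(\<Sum>k\<in>subtree p j. ext0 n u k) \<noteq> 0"
    using g self_in_subtree[of j p] unfolding generic_def by (metis atLeastAtMost_iff empty_iff le0
        subset_iff not_one_le_zero)
  moreover have "(\<Sum>k\<in>subtree p j. ext0 n u k) = (\<Sum>k\<in>subtree p j. u k)"
    using sub by (intro sum.cong) (auto simp: ext0_def)
  ultimately show ?thesis by simp
qed

lemma fF_eq_inverse: "fF n p u = 1 / (\<Prod>j\<in>{1..n}. \<Sum>k\<in>subtree p j. u k)"
  unfolding fF_def by (simp add: prod_dividef)

text \<open>
  Clearing denominators gives a polynomial identity, valid everywhere; at the isolating point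
  of a subtree of \<open>p\<^sub>1\<close> the left side vanishes, so some subtree of \<open>p\<^sub>2\<close> has sum zero there.
\<close>
lemma signed_forest_fraction_inj:
  assumes F1: "is_forest n p1" and F2: "is_forest n p2"
    and e1: "\<epsilon>1 \<in> {1, -1 :: int}"
    and H: "\<And>u. generic n u \<Longrightarrow> of_int \<epsilon>1 * fF n p1 u = of_int \<epsilon>2 * fF n p2 u"
  shows "p1 = p2 \<and> \<epsilon>1 = \<epsilon>2"
proof -
  let ?P = "\<lambda>p u. \<Prod>j\<in>{1..n}. \<Sum>k\<in>subtree p j. (u k :: real)"
  have P_nonzero: "?P p u \<noteq> 0" if "is_forest n p" "generic n u" for p u
    using subtree_sum_nonzero[OF that(1) _ that(2)] by simp
  have "of_int \<epsilon>1 * ?P p2 u = of_int \<epsilon>2 * ?P p1 u" if "generic n u" for u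
    using H[OF that] P_nonzero[OF F1 that] P_nonzero[OF F2 that]
    by (simp add: fF_eq_inverse field_simps)
  then have poly_id: "of_int \<epsilon>1 * ?P p2 a = of_int \<epsilon>2 * ?P p1 a" for a
    by (rule generic_prod_identity_extends)
  have "\<exists>k\<in>{1..n}. subtree p1 j = subtree p2 k" if j: "j \<in> {1..n}" for j
  proof -
    let ?A = "subtree p1 j"
    have A: "?A \<subseteq> {1..n}" "j \<in> ?A" using subtree_forest_subset[OF F1 j] by auto
    let ?u = "isolating_point n ?A j"
    have "(\<Sum>i\<in>?A. ?u i) = 0" using isolating_point_sum_self[OF finite_subset[OF A(1)] A(2)] by simp
    then have "?P p1 ?u = 0" using j by (subst prod_zero_iff) auto
    then have "of_int \<epsilon>1 * ?P p2 ?u = 0" using poly_id[of ?u] by (metis mult_zero_right)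
    moreover have "(of_int \<epsilon>1 :: real) \<noteq> 0" using e1 by auto
    ultimately have "?P p2 ?u = 0" by simp
    then obtain k where k: "k \<in> {1..n}" "(\<Sum>i\<in>subtree p2 k. ?u i) = 0" by (auto simp: prod_zero_iff)
    moreover have "subtree p2 k \<noteq> {}" using self_in_subtree by blast
    ultimately show ?thesis
      using isolating_point_sum_eq_0[OF A subtree_forest_subset[OF F2 k(1)]] by metis
  qed
  then have "p1 = p2" using forest_eqI_subtree[OF F1 F2] forest_subtrees_eq[OF F1] by blast
  moreover have ones: "generic n (\<lambda>_. 1)" by (rule generic_if_pos) simp
  then have "fF n p1 (\<lambda>_. 1) \<noteq> 0"
    unfolding fF_eq_inverse using P_nonzero[OF F1] by (metis divide_eq_0_iff zero_neq_one)
  ultimately show ?thesis using H[OF ones] by simp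
qed

theorem mainTheorem19:
  fixes n :: nat and \<sigma> :: "nat \<Rightarrow> nat"
    and \<epsilon> \<epsilon>' :: int and p p' :: "nat \<Rightarrow> nat option"
  assumes "n \<ge> 1"
    and "\<sigma> permutes {0..n}"
    and "is_forest n p" and "\<epsilon> \<in> {1, -1}"
    and "is_forest n p'" and "\<epsilon>' \<in> {1, -1}"
    and "anticyc_rel n \<sigma> (\<epsilon>, p) (\<epsilon>', p')"
  shows "C_eq (B0 n (\<epsilon>', p')) (relabel \<sigma> (B0 n (\<epsilon>, p)))"
proof -
  let ?q = "relabel_tree \<sigma> (graft0 n p)"
  have bij: "bij \<sigma>" and img: "\<sigma> ` {0..n} = {0..n}"
    using assms(2) by (simp_all add: permutes_bij permutes_image)
  have T: "rooted_tree {0..n} (\<sigma> 0) ?q"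
    using rooted_tree_relabel_tree[OF bij rooted_tree_graft0[OF assms(3)] img] .
  obtain p0 s where p0: "is_forest n p0" "s \<in> {1, -1}" "tree_edges (graft0 n p0) = tree_edges ?q"
    and frac: "\<And>u. tree_fraction {0..n} ?q (ext0 n u) = of_int s * fF n p0 u"
    and C: "\<And>\<epsilon>. C_eq (\<epsilon>, tree_edges ?q, \<sigma> 0) (s * \<epsilon>, tree_edges ?q, 0)"
    by (erule rooted_tree_signed_forest[OF T])
  have "of_int \<epsilon>' * fF n p' u = of_int (\<epsilon> * s) * fF n p0 u" if "generic n u" for u
    using assms(7) that frac fF_perm_pt[OF assms(2,3)] unfolding anticyc_rel_def by simp
  then have "p' = p0" "\<epsilon>' = \<epsilon> * s"
    using signed_forest_fraction_inj[OF assms(5) p0(1) assms(6)] by blast+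
  then have "B0 n (\<epsilon>', p') = (s * \<epsilon>, tree_edges ?q, 0)"
    using B0_eq_graft0[OF assms(5)] p0(3) by (simp add: mult.commute)
  moreover have "relabel \<sigma> (B0 n (\<epsilon>, p)) = (\<epsilon>, tree_edges ?q, \<sigma> 0)"
    using B0_eq_graft0[OF assms(3)] by (simp add: relabel_def tree_edges_relabel_tree[OF bij])
  ultimately show ?thesis using C C_eq_sym by metis
qed

end
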